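(* Let $R$ be a ring, $B\in R^{m\times k}$, $B'\in R^{m\times(n-k)}$, and $\phi={}_B\phi_{B'}$. Then \[ \mathrm{Defect}(\mathcal B(\phi,-))\;\cong\;\frac{R^{1\times k}}{\{\,yB\mid y\in R^{1\times m},\ yB'=0\,\}} \] as left $R$-modules.
   Context: Let $R$ be a ring; $R\text{-}\mathbf{mod}$ denotes finitely presented left $R$-modules. $R\text{-}\mathbf{mod}\text{-}\mathbf{mod}$ is the category of finitely presented additive functors $R\text{-}\mathbf{mod}\to\mathbf{Ab}$. If $\mathcal G\in R\text{-}\mathbf{mod}\text{-}\mathbf{mod}$ has a presentation $\operatorname{Hom}(N',-)\xrightarrow{\operatorname{Hom}(\alpha,-)}\operatorname{Hom}(N,-)\to\mathcal G\to0$ with $\alpha:N\to N'$ in $R\text{-}\mathbf{mod}$, its (contravariant) defect is $\mathrm{Defect}(\mathcal G):=\ker(\alpha)$ computed in the category of left $R$-modules; this is well defined up to isomorphism (it is the value at $\mathcal G$ of the unique exact functor $R\text{-}\mathbf{mod}\text{-}\mathbf{mod}\to(R\text{-}\mathbf{Mod})^{\mathrm{op}}$ sending the forgetful functor $\mathcal F=\operatorname{Hom}(R,-)$ to $R^{1\times1}$ and $r:\mathcal F\to\mathcal F$ to right multiplication by $r$). A pp formula ${}_B\phi_{B'}$ is given by $B\in R^{m\times k}$, $B'\in R^{m\times(n-k)}$, and $\mathcal B(\phi,M)=\{\omega\in M^{k\times1}\mid\exists\,\omega'\in M^{(n-k)\times1}: B\omega+B'\omega'=0\}$; $\mathcal B(\phi,-)$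 (restricted to $R\text{-}\mathbf{mod}$) lies in $R\text{-}\mathbf{mod}\text{-}\mathbf{mod}$. *)

theory Defs
  imports Main "HOL-Library.FuncSet"
begin

record ('r, 'm) lmod =
  mcar :: "'m set"
  madd :: "'m \<Rightarrow> 'm \<Rightarrow> 'm"
  mzero :: "'m"
  msmul :: "'r \<Rightarrow> 'm \<Rightarrow> 'm"

definition lmodule :: "('r::ring_1, 'm) lmod \<Rightarrow> bool" where
  "lmodule M \<longleftrightarrow>
     mzero M \<in> mcar M \<and>
     (\<forall>x\<in>mcar M. \<forall>y\<in>mcar M. madd M x y \<in> mcar M) \<and>
     (\<forall>x\<in>mcar M. \<forall>y\<in>mcar M. \<forall>z\<in>mcar M. madd M (madd M x y) z = madd M x (madd M y z)) \<and>
     (\<forall>x\<in>mcar M. \<forall>y\<in>mcar M. madd M x y = madd M y x) \<and>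
     (\<forall>x\<in>mcar M. madd M (mzero M) x = x) \<and>
     (\<forall>x\<in>mcar M. \<exists>y\<in>mcar M. madd M x y = mzero M) \<and>
     (\<forall>r. \<forall>x\<in>mcar M. msmul M r x \<in> mcar M) \<and>
     (\<forall>r. \<forall>x\<in>mcar M. \<forall>y\<in>mcar M. msmul M r (madd M x y) = madd M (msmul M r x) (msmul M r y)) \<and>
     (\<forall>r s. \<forall>x\<in>mcar M. msmul M (r + s) x = madd M (msmul M r x) (msmul M s x)) \<and>
     (\<forall>r s. \<forall>x\<in>mcar M. msmul M (r * s) x = msmul M r (msmul M s x)) \<and>
     (\<forall>x\<in>mcar M. msmul M 1 x = x)"

definition lhom :: "('r::ring_1, 'm) lmod \<Rightarrow> ('r, 'n) lmod \<Rightarrow> ('m \<Rightarrow> 'n) \<Rightarrow> bool" where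
  "lhom M N f \<longleftrightarrow> f \<in> mcar M \<rightarrow> mcar N \<and>
     (\<forall>x\<in>mcar M. \<forall>y\<in>mcar M. f (madd M x y) = madd N (f x) (f y)) \<and>
     (\<forall>r. \<forall>x\<in>mcar M. f (msmul M r x) = msmul N r (f x))"

definition Hom :: "('r::ring_1, 'm) lmod \<Rightarrow> ('r, 'n) lmod \<Rightarrow> ('m \<Rightarrow> 'n) set" where
  "Hom M N = {f. lhom M N f \<and> f \<in> extensional (mcar M)}"

definition liso :: "('r::ring_1, 'm) lmod \<Rightarrow> ('r, 'n) lmod \<Rightarrow> bool" where
  "liso M N \<longleftrightarrow> (\<exists>f. lhom M N f \<and> bij_betw f (mcar M) (mcar N))"

definition submod :: "('r, 'm) lmod \<Rightarrow> 'm set \<Rightarrow> ('r, 'm) lmod" where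
  "submod M S = M\<lparr>mcar := S\<rparr>"

definition lker :: "('r, 'm) lmod \<Rightarrow> ('r, 'n) lmod \<Rightarrow> ('m \<Rightarrow> 'n) \<Rightarrow> 'm set" where
  "lker M N f = {x \<in> mcar M. f x = mzero N}"

definition coset :: "('r, 'm) lmod \<Rightarrow> 'm set \<Rightarrow> 'm \<Rightarrow> 'm set" where
  "coset M U a = {madd M a u | u. u \<in> U}"

definition quotmod :: "('r, 'm) lmod \<Rightarrow> 'm set \<Rightarrow> ('r, 'm set) lmod" where
  "quotmod M U = \<lparr> mcar = {coset M U a | a. a \<in> mcar M},
      madd = (\<lambda>X Y. {madd M x y | x y. x \<in> X \<and> y \<in> Y}),
      mzero = U,
      msmul = (\<lambda>r X. {madd M (msmul M r x) u | x u. x \<in> X \<and> u \<in> U}) \<rparr>"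

text \<open>The left module R^{1 x k} of row vectors (entries indexed by j < k), with left scalar action.\<close>
definition rowmod :: "nat \<Rightarrow> ('r::ring_1, nat \<Rightarrow> 'r) lmod" where
  "rowmod k = \<lparr> mcar = {..<k} \<rightarrow>\<^sub>E UNIV,
      madd = (\<lambda>x y. restrict (\<lambda>j. x j + y j) {..<k}),
      mzero = restrict (\<lambda>_. 0) {..<k},
      msmul = (\<lambda>r x. restrict (\<lambda>j. r * x j) {..<k}) \<rparr>"

text \<open>Row vector y in R^{1 x p} times matrix A in R^{p x k}.\<close>
definition vecmat :: "(nat \<Rightarrow> 'r::ring_1) \<Rightarrow> (nat \<Rightarrow> nat \<Rightarrow> 'r) \<Rightarrow> nat \<Rightarrow> nat \<Rightarrow> (nat \<Rightarrow> 'r)" where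
  "vecmat y A p k = restrict (\<lambda>j. \<Sum>i<p. y i * A i j) {..<k}"

text \<open>Finitely presented: R^{1 x q} --(.A)--> R^{1 x p} --f--> M --> 0 exact.\<close>
definition fp :: "('r::ring_1, 'm) lmod \<Rightarrow> bool" where
  "fp M \<longleftrightarrow> lmodule M \<and> (\<exists>p q A f. lhom (rowmod p) M f \<and> f ` mcar (rowmod p) = mcar M \<and>
      lker (rowmod p) M f = {vecmat y A q p | y. y \<in> mcar (rowmod q)})"

definition msum :: "('r, 'm) lmod \<Rightarrow> (nat \<Rightarrow> 'm) \<Rightarrow> nat \<Rightarrow> 'm" where
  "msum M f k = foldr (\<lambda>j. madd M (f j)) [0..<k] (mzero M)"

text \<open>B(phi, M) for phi = _B phi_B', B in R^{m x k}, B' in R^{m x (n-k)}; elements of M^{k x 1}.\<close>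
definition ppB :: "nat \<Rightarrow> nat \<Rightarrow> nat \<Rightarrow> (nat \<Rightarrow> nat \<Rightarrow> 'r::ring_1) \<Rightarrow> (nat \<Rightarrow> nat \<Rightarrow> 'r)
    \<Rightarrow> ('r, 'm) lmod \<Rightarrow> (nat \<Rightarrow> 'm) set" where
  "ppB m k n B B' M = {\<omega> \<in> {..<k} \<rightarrow>\<^sub>E mcar M. \<exists>\<omega>' \<in> {..<n-k} \<rightarrow>\<^sub>E mcar M.
      \<forall>i<m. madd M (msum M (\<lambda>j. msmul M (B i j) (\<omega> j)) k)
                   (msum M (\<lambda>j. msmul M (B' i j) (\<omega>' j)) (n-k)) = mzero M}"

text \<open>Test objects of R-mod are taken with carriers in the fixed type (nat => 'r) set;
  every finitely presented module is isomorphic to one of these (R^{1 x p}/K),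
  so this is an (essentially small) skeleton-type full subcategory equivalent to R-mod.\<close>
type_synonym 'r univ = "(nat \<Rightarrow> 'r) set"

text \<open>A presentation Hom(N',-) --Hom(alpha,-)--> Hom(N,-) --eta--> B(phi,-) --> 0,
  eta an (additive) natural transformation, exact at every object of R-mod.\<close>
definition is_presentation :: "nat \<Rightarrow> nat \<Rightarrow> nat \<Rightarrow> (nat \<Rightarrow> nat \<Rightarrow> 'r::ring_1) \<Rightarrow> (nat \<Rightarrow> nat \<Rightarrow> 'r)
    \<Rightarrow> ('r, 'n) lmod \<Rightarrow> ('r, 'n2) lmod \<Rightarrow> ('n \<Rightarrow> 'n2)
    \<Rightarrow> (('r, 'r univ) lmod \<Rightarrow> ('n \<Rightarrow> 'r univ) \<Rightarrow> nat \<Rightarrow> 'r univ) \<Rightarrow> bool" where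
  "is_presentation m k n B B' N N' \<alpha> \<eta> \<longleftrightarrow>
     fp N \<and> fp N' \<and> \<alpha> \<in> Hom N N' \<and>
     (\<forall>M::('r, 'r univ) lmod. fp M \<longrightarrow>
        (\<forall>f\<in>Hom N M. \<eta> M f \<in> ppB m k n B B' M) \<and>
        (\<forall>f\<in>Hom N M. \<forall>g\<in>Hom N M.
           \<eta> M (restrict (\<lambda>x. madd M (f x) (g x)) (mcar N))
             = restrict (\<lambda>j. madd M (\<eta> M f j) (\<eta> M g j)) {..<k}) \<and>
        \<eta> M ` Hom N M = ppB m k n B B' M \<and>
        {compose (mcar N) h \<alpha> | h. h \<in> Hom N' M}
          = {f \<in> Hom N M. \<eta> M f = restrict (\<lambda>_. mzero M) {..<k}}) \<and>
     (\<forall>(M::('r, 'r univ) lmod) (M'::('r, 'r univ) lmod). fp M \<and> fp M' \<longrightarrow>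
        (\<forall>g\<in>Hom M M'. \<forall>f\<in>Hom N M.
           \<eta> M' (compose (mcar N) g f) = restrict (\<lambda>j. g (\<eta> M f j)) {..<k}))"

end

theory Submission
  imports Defs
begin

text \<open>
  By Yoneda, the epimorphism \<open>\<eta> : Hom(N,-) \<rightarrow> B(\<phi>,-)\<close> is evaluation at a tuple
  \<open>g\<^sub>1, \<dots>, g\<^sub>k\<close> of elements of \<open>N\<close>. Exactness at \<open>Hom(N,-)\<close> gives \<open>\<alpha> g\<^sub>j = 0\<close>, and, tested on
  \<open>N\<close> modulo the \<open>g\<^sub>j\<close>, that the \<open>g\<^sub>j\<close> generate \<open>ker \<alpha>\<close>. So \<open>x \<mapsto> \<Sum> x\<^sub>j g\<^sub>j\<close> maps
  \<open>R\<^sup>1\<^sup>\<times>\<^sup>k\<close> onto \<open>ker \<alpha>\<close>, and its kernel is computed with the two halves of the hypothesis: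
  the witness for \<open>(g\<^sub>j) \<in> B(\<phi>,N)\<close> shows that every \<open>yB\<close> with \<open>yB' = 0\<close> is a relation,
  and surjectivity onto \<open>B(\<phi>,L)\<close> for the generic module \<open>L = R\<^sup>1\<^sup>\<times>\<^sup>n / R\<^sup>1\<^sup>\<times>\<^sup>m (B B')\<close> shows
  that there are no others.
\<close>

section \<open>Modules and homomorphisms\<close>

lemma lmodule_zero_closed: "lmodule M \<Longrightarrow> mzero M \<in> mcar M"
  unfolding lmodule_def by (elim conjE) blast

lemma lmodule_add_closed: "lmodule M \<Longrightarrow> x \<in> mcar M \<Longrightarrow> y \<in> mcar M \<Longrightarrow> madd M x y \<in> mcar M"
  unfolding lmodule_def by (elim conjE) blast

lemma lmodule_smul_closed: "lmodule M \<Longrightarrow> x \<in> mcar M \<Longrightarrow> msmul M r x \<in> mcar M"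
  unfolding lmodule_def by (elim conjE) blast

lemma lmodule_add_assoc:
  "lmodule M \<Longrightarrow> x \<in> mcar M \<Longrightarrow> y \<in> mcar M \<Longrightarrow> z \<in> mcar M \<Longrightarrow>
    madd M (madd M x y) z = madd M x (madd M y z)"
  unfolding lmodule_def by (elim conjE) blast

lemma lmodule_add_commute: "lmodule M \<Longrightarrow> x \<in> mcar M \<Longrightarrow> y \<in> mcar M \<Longrightarrow> madd M x y = madd M y x"
  unfolding lmodule_def by (elim conjE) blast

lemma lmodule_add_zero_left: "lmodule M \<Longrightarrow> x \<in> mcar M \<Longrightarrow> madd M (mzero M) x = x"
  unfolding lmodule_def by (elim conjE) blast

lemma lmodule_add_zero_right: "lmodule M \<Longrightarrow> x \<in> mcar M \<Longrightarrow> madd M x (mzero M) = x"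
  by (metis lmodule_add_commute lmodule_add_zero_left lmodule_zero_closed)

lemma lmodule_add_inverse: "lmodule M \<Longrightarrow> x \<in> mcar M \<Longrightarrow> \<exists>y\<in>mcar M. madd M x y = mzero M"
  unfolding lmodule_def by (elim conjE) blast

lemma lmodule_smul_add:
  "lmodule M \<Longrightarrow> x \<in> mcar M \<Longrightarrow> y \<in> mcar M \<Longrightarrow> msmul M r (madd M x y) = madd M (msmul M r x) (msmul M r y)"
  unfolding lmodule_def by (elim conjE) blast

lemma lmodule_add_right_cancel:
  assumes M: "lmodule M" and a: "a \<in> mcar M" and b: "b \<in> mcar M" and c: "c \<in> mcar M"
    and eq: "madd M a c = madd M b c"
  shows "a = b"
proof -
  obtain d where d: "d \<in> mcar M" "madd M c d = mzero M" using lmodule_add_inverse[OF M c] by blast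
  have "a = madd M (madd M a c) d" using lmodule_add_assoc[OF M a c d(1)] d lmodule_add_zero_right[OF M a] by simp
  also have "\<dots> = madd M (madd M b c) d" using eq by simp
  also have "\<dots> = b" using lmodule_add_assoc[OF M b c d(1)] d lmodule_add_zero_right[OF M b] by simp
  finally show ?thesis .
qed

lemma lmodule_add_idem_imp_zero: "lmodule M \<Longrightarrow> a \<in> mcar M \<Longrightarrow> madd M a a = a \<Longrightarrow> a = mzero M"
  by (metis lmodule_add_right_cancel lmodule_add_zero_left lmodule_zero_closed)

lemma lmodule_smul_zero: "lmodule M \<Longrightarrow> msmul M r (mzero M) = mzero M"
  by (metis lmodule_add_idem_imp_zero lmodule_add_zero_left lmodule_smul_add lmodule_smul_closed
      lmodule_zero_closed)

lemma lhom_closed: "lhom M N h \<Longrightarrow> x \<in> mcar M \<Longrightarrow> h x \<in> mcar N"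
  by (auto simp: lhom_def)

lemma lhom_add: "lhom M N h \<Longrightarrow> x \<in> mcar M \<Longrightarrow> y \<in> mcar M \<Longrightarrow> h (madd M x y) = madd N (h x) (h y)"
  by (auto simp: lhom_def)

lemma lhom_smul: "lhom M N h \<Longrightarrow> x \<in> mcar M \<Longrightarrow> h (msmul M r x) = msmul N r (h x)"
  by (auto simp: lhom_def)

lemma lhom_zero:
  assumes M: "lmodule M" and N: "lmodule N" and h: "lhom M N h"
  shows "h (mzero M) = mzero N"
proof -
  have "madd N (h (mzero M)) (h (mzero M)) = h (mzero M)"
    using lhom_add[OF h] lmodule_zero_closed[OF M] lmodule_add_zero_left[OF M] by metis
  then show ?thesis
    using lmodule_add_idem_imp_zero[OF N lhom_closed[OF h lmodule_zero_closed[OF M]]] by simp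
qed

lemma lhom_compose: "lhom M N h \<Longrightarrow> lhom N P g \<Longrightarrow> lhom M P (\<lambda>x. g (h x))"
  unfolding lhom_def Pi_def by auto

lemma lhom_inv_into:
  assumes M: "lmodule M" and h: "lhom M N h" and bij: "bij_betw h (mcar M) (mcar N)"
  shows "lhom N M (inv_into (mcar M) h)"
proof -
  let ?i = "inv_into (mcar M) h"
  have i_closed: "?i y \<in> mcar M" if "y \<in> mcar N" for y
    using bij that by (metis bij_betw_def inv_into_into)
  have h_i: "h (?i y) = y" if "y \<in> mcar N" for y
    using bij that by (simp add: bij_betw_imp_surj_on f_inv_into_f)
  have i_h: "?i (h x) = x" if "x \<in> mcar M" for x
    using bij that by (simp add: bij_betw_imp_inj_on)
  show ?thesis unfolding lhom_def
  proof (intro conjI ballI allI)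
    show "?i \<in> mcar N \<rightarrow> mcar M" using i_closed by auto
  next
    fix x y assume x: "x \<in> mcar N" and y: "y \<in> mcar N"
    have "madd N x y = h (madd M (?i x) (?i y))"
      using lhom_add[OF h i_closed[OF x] i_closed[OF y]] h_i x y by simp
    then show "?i (madd N x y) = madd M (?i x) (?i y)"
      using i_h lmodule_add_closed[OF M i_closed[OF x] i_closed[OF y]] by simp
  next
    fix r x assume x: "x \<in> mcar N"
    have "msmul N r x = h (msmul M r (?i x))" using lhom_smul[OF h i_closed[OF x]] h_i x by simp
    then show "?i (msmul N r x) = msmul M r (?i x)" using i_h lmodule_smul_closed[OF M i_closed[OF x]] by simp
  qed
qed

lemma Hom_compose_inv_into:
  assumes N: "lmodule N" and Q: "lmodule Q" and g: "g \<in> Hom N M"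
    and \<theta>: "\<theta> \<in> Hom N Q" and bij: "bij_betw \<theta> (mcar N) (mcar Q)"
  defines "G \<equiv> restrict (\<lambda>y. g (inv_into (mcar N) \<theta> y)) (mcar Q)"
  shows "G \<in> Hom Q M" and "compose (mcar N) G \<theta> = g"
proof -
  have g_hom: "lhom N M g" and g_ext: "g \<in> extensional (mcar N)" using g by (auto simp: Hom_def)
  have \<theta>_hom: "lhom N Q \<theta>" using \<theta> by (simp add: Hom_def)
  have gi: "lhom Q M (\<lambda>y. g (inv_into (mcar N) \<theta> y))"
    by (rule lhom_compose[OF lhom_inv_into[OF N \<theta>_hom bij] g_hom])
  have "lhom Q M G"
    unfolding lhom_def G_def
    using lhom_closed[OF gi] lhom_add[OF gi] lhom_smul[OF gi]
      lmodule_add_closed[OF Q] lmodule_smul_closed[OF Q] by auto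
  then show "G \<in> Hom Q M" by (simp add: Hom_def G_def)
  show "compose (mcar N) G \<theta> = g"
  proof (rule extensionalityI[OF _ g_ext])
    fix x assume "x \<in> mcar N"
    then show "compose (mcar N) G \<theta> x = g x"
      using lhom_closed[OF \<theta>_hom] bij by (simp add: compose_def G_def bij_betw_imp_inj_on)
  qed (simp add: compose_def)
qed

lemma foldr_madd_closed:
  "lmodule M \<Longrightarrow> (\<And>j. j \<in> set xs \<Longrightarrow> g j \<in> mcar M) \<Longrightarrow> z \<in> mcar M \<Longrightarrow>
    foldr (\<lambda>j. madd M (g j)) xs z \<in> mcar M"
  by (induction xs) (auto intro: lmodule_add_closed)

lemma lhom_foldr_madd:
  "lhom M N h \<Longrightarrow> lmodule M \<Longrightarrow> (\<And>j. j \<in> set xs \<Longrightarrow> g j \<in> mcar M) \<Longrightarrow> z \<in> mcar M \<Longrightarrow>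
    h (foldr (\<lambda>j. madd M (g j)) xs z) = foldr (\<lambda>j. madd N (h (g j))) xs (h z)"
  by (induction xs) (auto simp: lhom_add foldr_madd_closed)

lemma foldr_madd_zero:
  "lmodule M \<Longrightarrow> (\<And>j. j \<in> set xs \<Longrightarrow> g j = mzero M) \<Longrightarrow> foldr (\<lambda>j. madd M (g j)) xs (mzero M) = mzero M"
  by (induction xs) (auto simp: lmodule_add_zero_left lmodule_zero_closed)

lemma msum_cong: "(\<And>j. j < t \<Longrightarrow> g j = g' j) \<Longrightarrow> msum M g t = msum M g' t"
  unfolding msum_def by (rule foldr_cong) auto

lemma msum_zero: "lmodule M \<Longrightarrow> (\<And>j. j < t \<Longrightarrow> g j = mzero M) \<Longrightarrow> msum M g t = mzero M"
  unfolding msum_def by (rule foldr_madd_zero) auto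

lemma lhom_msum:
  assumes h: "lhom M N h" and M: "lmodule M" and N: "lmodule N" and g: "\<And>j. j < t \<Longrightarrow> g j \<in> mcar M"
  shows "h (msum M g t) = msum N (\<lambda>j. h (g j)) t"
  unfolding msum_def
  using lhom_foldr_madd[OF h M, of "[0..<t]" g "mzero M"] g lhom_zero[OF M N h] lmodule_zero_closed[OF M]
  by auto

lemma lmodule_lhom_image:
  assumes M: "lmodule M" and h: "lhom M Q h" and onto: "h ` mcar M = mcar Q"
    and zero: "h (mzero M) = mzero Q"
  shows "lmodule Q"
proof -
  have pre: "\<exists>x\<in>mcar M. X = h x" if "X \<in> mcar Q" for X using onto that by auto
  note add = lhom_add[OF h] and smul = lhom_smul[OF h] and closed = lhom_closed[OF h]
    and add_closed = lmodule_add_closed[OF M] and smul_closed = lmodule_smul_closed[OF M]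
  show ?thesis
    unfolding lmodule_def
  proof (intro conjI ballI allI)
    show "mzero Q \<in> mcar Q" using closed[OF lmodule_zero_closed[OF M]] zero by simp
  next
    fix X Y assume "X \<in> mcar Q" "Y \<in> mcar Q"
    then obtain x y where x: "x \<in> mcar M" "X = h x" and y: "y \<in> mcar M" "Y = h y" using pre by metis
    have XY: "madd Q X Y = h (madd M x y)" using add x y by simp
    show "madd Q X Y \<in> mcar Q" unfolding XY by (rule closed[OF add_closed[OF x(1) y(1)]])
    show "madd Q X Y = madd Q Y X" using XY add x y lmodule_add_commute[OF M x(1) y(1)] by simp
    fix r
    have "msmul Q r (madd Q X Y) = h (msmul M r (madd M x y))"
      unfolding XY using smul add_closed x y by simp
    also have "\<dots> = h (madd M (msmul M r x) (msmul M r y))" using lmodule_smul_add[OF M x(1) y(1)] by simp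
    also have "\<dots> = madd Q (msmul Q r X) (msmul Q r Y)" using add smul smul_closed x y by simp
    finally show "msmul Q r (madd Q X Y) = madd Q (msmul Q r X) (msmul Q r Y)" .
  next
    fix X Y Z assume "X \<in> mcar Q" "Y \<in> mcar Q" "Z \<in> mcar Q"
    then obtain x y z where "x \<in> mcar M" "y \<in> mcar M" "z \<in> mcar M" "X = h x" "Y = h y" "Z = h z"
      using pre by metis
    then show "madd Q (madd Q X Y) Z = madd Q X (madd Q Y Z)"
      using add_closed lmodule_add_assoc[OF M] by (simp flip: add)
  next
    fix X r s assume "X \<in> mcar Q"
    then obtain x where x: "x \<in> mcar M" "X = h x" using pre by metis
    show "madd Q (mzero Q) X = X"
      using x add[OF lmodule_zero_closed[OF M] x(1)] lmodule_add_zero_left[OF M x(1)] by (simp flip: zero)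
    obtain y where y: "y \<in> mcar M" "madd M x y = mzero M" using lmodule_add_inverse[OF M x(1)] by blast
    show "\<exists>Y\<in>mcar Q. madd Q X Y = mzero Q"
      using x y add[OF x(1) y(1)] closed zero by (intro bexI[of _ "h y"]) simp_all
    show "msmul Q r X \<in> mcar Q" using closed[OF smul_closed[OF x(1)]] smul[OF x(1)] x(2) by simp
    show "msmul Q (r + s) X = madd Q (msmul Q r X) (msmul Q s X)"
      using x smul_closed M unfolding lmodule_def by (simp flip: smul add)
    show "msmul Q (r * s) X = msmul Q r (msmul Q s X)"
      using x smul_closed M unfolding lmodule_def by (simp flip: smul)
    show "msmul Q 1 X = X"
      using x M unfolding lmodule_def by (simp flip: smul)
  qed
qed

section \<open>Row vectors and matrices\<close>

abbreviation rowvecs :: "nat \<Rightarrow> (nat \<Rightarrow> 'r::ring_1) set" where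
  "rowvecs p \<equiv> mcar (rowmod p)"

lemma rowvecs_eq: "rowvecs p = {..<p} \<rightarrow>\<^sub>E UNIV"
  by (simp add: rowmod_def)

lemma rowmod_madd: "madd (rowmod p) x y = restrict (\<lambda>j. x j + y j) {..<p}"
  by (simp add: rowmod_def)

lemma rowmod_msmul: "msmul (rowmod p) r x = restrict (\<lambda>j. r * x j) {..<p}"
  by (simp add: rowmod_def)

lemma rowmod_mzero: "mzero (rowmod p) = restrict (\<lambda>_. 0) {..<p}"
  by (simp add: rowmod_def)

lemma restrict_in_rowvecs [simp]: "restrict g {..<p} \<in> rowvecs p"
  by (simp add: rowmod_def)

lemma rowvecs_eqI: "x \<in> rowvecs p \<Longrightarrow> y \<in> rowvecs p \<Longrightarrow> (\<And>j. j < p \<Longrightarrow> x j = y j) \<Longrightarrow> x = y"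
  unfolding rowvecs_eq by (rule extensionalityI[of _ "{..<p}"]) (auto simp: PiE_iff)

lemma lmodule_rowmod: "lmodule (rowmod p)"
  unfolding lmodule_def rowmod_madd rowmod_msmul rowmod_mzero rowvecs_eq
proof (intro conjI ballI allI)
  fix x :: "nat \<Rightarrow> 'a" assume "x \<in> {..<p} \<rightarrow>\<^sub>E UNIV"
  then show "\<exists>y\<in>{..<p} \<rightarrow>\<^sub>E UNIV. restrict (\<lambda>j. x j + y j) {..<p} = restrict (\<lambda>_. 0) {..<p}"
    by (intro bexI[of _ "restrict (\<lambda>j. - x j) {..<p}"]) (auto simp: fun_eq_iff)
qed (auto simp: PiE_iff extensional_def fun_eq_iff algebra_simps)

lemma vecmat_in_rowvecs [simp]: "vecmat c v t p \<in> rowvecs p"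
  by (simp add: vecmat_def)

lemma vecmat_restrict: "vecmat (restrict y {..<q}) A q p = vecmat y A q p"
  unfolding vecmat_def by (rule restrict_ext) (rule sum.cong, auto)

lemma vecmat_add: "madd (rowmod p) (vecmat y A q p) (vecmat z A q p) = vecmat (madd (rowmod q) y z) A q p"
  by (auto simp: vecmat_def rowmod_madd fun_eq_iff sum.distrib algebra_simps)

lemma vecmat_smul: "msmul (rowmod p) r (vecmat y A q p) = vecmat (msmul (rowmod q) r y) A q p"
  by (auto simp: vecmat_def rowmod_msmul fun_eq_iff sum_distrib_left algebra_simps)

lemma vecmat_zero: "vecmat (mzero (rowmod q)) A q p = mzero (rowmod p)"
  by (auto simp: vecmat_def rowmod_mzero fun_eq_iff)

lemma lhom_vecmat_right: "lhom (rowmod q) (rowmod p) (\<lambda>y. vecmat y A q p)"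
  unfolding lhom_def by (simp add: vecmat_add vecmat_smul)

lemma vecmat_madd_rows:
  "vecmat y (\<lambda>i. madd (rowmod p) (X i) (Y i)) m p = madd (rowmod p) (vecmat y X m p) (vecmat y Y m p)"
  by (auto simp: vecmat_def rowmod_madd fun_eq_iff sum.distrib algebra_simps)

lemma vecmat_vecmat: "vecmat (vecmat y B m k) C k p = vecmat y (\<lambda>i. vecmat (B i) C k p) m p"
  unfolding vecmat_def
  by (rule restrict_ext) (simp add: sum_distrib_left sum_distrib_right mult.assoc sum.swap[of _ "{..<k}"])

lemma msum_rowmod_eq_vecmat: "msum (rowmod p) (\<lambda>j. msmul (rowmod p) (c j) (v j)) t = vecmat c v t p"
proof -
  have foldr_eq: "foldr (\<lambda>j. madd (rowmod p) (g j)) xs z = restrict (\<lambda>s. (\<Sum>j\<leftarrow>xs. g j s) + z s) {..<p}"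
    if "z \<in> rowvecs p" for g xs z
    using that by (induction xs) (auto simp: rowmod_madd rowvecs_eq fun_eq_iff PiE_iff extensional_def)
  have "msum (rowmod p) (\<lambda>j. msmul (rowmod p) (c j) (v j)) t =
     restrict (\<lambda>s. (\<Sum>j\<leftarrow>[0..<t]. msmul (rowmod p) (c j) (v j) s) + mzero (rowmod p) s) {..<p}"
    unfolding msum_def by (rule foldr_eq) (simp add: rowmod_mzero)
  also have "\<dots> = vecmat c v t p"
    unfolding vecmat_def
    by (auto simp: rowmod_msmul rowmod_mzero fun_eq_iff sum_list_sum_nth atLeast0LessThan)
  finally show ?thesis .
qed

lemma lhom_vecmat:
  assumes h: "lhom (rowmod p) M h" and M: "lmodule M" and v: "\<And>j. j < t \<Longrightarrow> v j \<in> rowvecs p"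
  shows "h (vecmat c v t p) = msum M (\<lambda>j. msmul M (c j) (h (v j))) t"
proof -
  have "h (vecmat c v t p) = msum M (\<lambda>j. h (msmul (rowmod p) (c j) (v j))) t"
    unfolding msum_rowmod_eq_vecmat[symmetric]
    by (rule lhom_msum[OF h lmodule_rowmod M]) (simp add: rowmod_msmul)
  also have "\<dots> = msum M (\<lambda>j. msmul M (c j) (h (v j))) t"
    by (rule msum_cong) (simp add: lhom_smul[OF h] v)
  finally show ?thesis .
qed

section \<open>Quotients of row modules\<close>

definition row_submodule :: "nat \<Rightarrow> (nat \<Rightarrow> 'r::ring_1) set \<Rightarrow> bool" where
  "row_submodule p W \<longleftrightarrow> W \<subseteq> rowvecs p \<and> mzero (rowmod p) \<in> W \<and>
     (\<forall>x\<in>W. \<forall>y\<in>W. madd (rowmod p) x y \<in> W) \<and> (\<forall>r. \<forall>x\<in>W. msmul (rowmod p) r x \<in> W)"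

lemma row_submodule_vecmat_image: "row_submodule p {vecmat y A q p | y. y \<in> rowvecs q}"
  unfolding row_submodule_def
proof (intro conjI ballI allI)
  show "mzero (rowmod p) \<in> {vecmat y A q p |y. y \<in> rowvecs q}"
    using vecmat_zero[symmetric] lmodule_zero_closed[OF lmodule_rowmod] by blast
next
  fix x y assume "x \<in> {vecmat y A q p |y. y \<in> rowvecs q}" "y \<in> {vecmat y A q p |y. y \<in> rowvecs q}"
  then show "madd (rowmod p) x y \<in> {vecmat y A q p |y. y \<in> rowvecs q}"
    by (auto simp: vecmat_add) (auto simp: rowmod_madd)
next
  fix r x assume "x \<in> {vecmat y A q p |y. y \<in> rowvecs q}"
  then show "msmul (rowmod p) r x \<in> {vecmat y A q p |y. y \<in> rowvecs q}"
    by (auto simp: vecmat_smul) (auto simp: rowmod_msmul)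
qed auto

lemma row_submodule_lker:
  assumes N: "lmodule N" and f: "lhom (rowmod p) N f"
  shows "row_submodule p (lker (rowmod p) N f)"
  unfolding row_submodule_def lker_def
  using lhom_zero[OF lmodule_rowmod N f] lmodule_zero_closed[OF lmodule_rowmod]
    lhom_add[OF f] lhom_smul[OF f] lmodule_add_closed[OF lmodule_rowmod] lmodule_smul_closed[OF lmodule_rowmod]
    lmodule_add_zero_left[OF N lmodule_zero_closed[OF N]] lmodule_smul_zero[OF N]
  by auto

context
  fixes p :: nat and W :: "(nat \<Rightarrow> 'r::ring_1) set"
  assumes W: "row_submodule p W"
begin

lemma row_submodule_subset: "u \<in> W \<Longrightarrow> u \<in> rowvecs p"
  using W by (auto simp: row_submodule_def)

lemma row_submodule_zero: "mzero (rowmod p) \<in> W"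
  using W by (auto simp: row_submodule_def)

lemma row_submodule_add: "u \<in> W \<Longrightarrow> v \<in> W \<Longrightarrow> madd (rowmod p) u v \<in> W"
  using W by (auto simp: row_submodule_def)

lemma row_submodule_smul: "u \<in> W \<Longrightarrow> msmul (rowmod p) r u \<in> W"
  using W by (auto simp: row_submodule_def)

lemma coset_iff: "x \<in> coset (rowmod p) W a \<longleftrightarrow> (\<exists>u\<in>W. x = madd (rowmod p) a u)"
  by (auto simp: coset_def)

lemma coset_self: "a \<in> rowvecs p \<Longrightarrow> a \<in> coset (rowmod p) W a"
  unfolding coset_iff using row_submodule_zero lmodule_add_zero_right[OF lmodule_rowmod] by metis

lemma quotmod_add_coset:
  assumes a: "a \<in> rowvecs p" and b: "b \<in> rowvecs p"
  shows "madd (quotmod (rowmod p) W) (coset (rowmod p) W a) (coset (rowmod p) W b)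
    = coset (rowmod p) W (madd (rowmod p) a b)"
proof -
  have "{madd (rowmod p) x y |x y. x \<in> coset (rowmod p) W a \<and> y \<in> coset (rowmod p) W b}
      = coset (rowmod p) W (madd (rowmod p) a b)"
  proof (intro equalityI subsetI)
    fix z assume "z \<in> {madd (rowmod p) x y |x y. x \<in> coset (rowmod p) W a \<and> y \<in> coset (rowmod p) W b}"
    then obtain u v where uv: "u \<in> W" "v \<in> W"
      "z = madd (rowmod p) (madd (rowmod p) a u) (madd (rowmod p) b v)"
      unfolding coset_iff by blast
    then have "z = madd (rowmod p) (madd (rowmod p) a b) (madd (rowmod p) u v)"
      by (simp add: rowmod_madd fun_eq_iff algebra_simps)
    then show "z \<in> coset (rowmod p) W (madd (rowmod p) a b)"
      using row_submodule_add uv unfolding coset_iff by blast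
  next
    fix z assume "z \<in> coset (rowmod p) W (madd (rowmod p) a b)"
    then obtain w where w: "w \<in> W" "z = madd (rowmod p) (madd (rowmod p) a b) w"
      unfolding coset_iff by blast
    then have "z = madd (rowmod p) (madd (rowmod p) a w) (madd (rowmod p) b (mzero (rowmod p)))"
      by (simp add: rowmod_madd rowmod_mzero fun_eq_iff algebra_simps)
    then show "z \<in> {madd (rowmod p) x y |x y. x \<in> coset (rowmod p) W a \<and> y \<in> coset (rowmod p) W b}"
      using w row_submodule_zero unfolding coset_iff by blast
  qed
  then show ?thesis by (simp add: quotmod_def)
qed

lemma quotmod_smul_coset:
  assumes a: "a \<in> rowvecs p"
  shows "msmul (quotmod (rowmod p) W) r (coset (rowmod p) W a) = coset (rowmod p) W (msmul (rowmod p) r a)"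
proof -
  have "{madd (rowmod p) (msmul (rowmod p) r x) u |x u. x \<in> coset (rowmod p) W a \<and> u \<in> W}
      = coset (rowmod p) W (msmul (rowmod p) r a)"
  proof (intro equalityI subsetI)
    fix z assume "z \<in> {madd (rowmod p) (msmul (rowmod p) r x) u |x u. x \<in> coset (rowmod p) W a \<and> u \<in> W}"
    then obtain u v where uv: "u \<in> W" "v \<in> W"
      "z = madd (rowmod p) (msmul (rowmod p) r (madd (rowmod p) a u)) v"
      unfolding coset_iff by blast
    then have "z = madd (rowmod p) (msmul (rowmod p) r a) (madd (rowmod p) (msmul (rowmod p) r u) v)"
      by (simp add: rowmod_madd rowmod_msmul fun_eq_iff algebra_simps)
    then show "z \<in> coset (rowmod p) W (msmul (rowmod p) r a)"
      using row_submodule_add row_submodule_smul uv unfolding coset_iff by blast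
  next
    fix z assume "z \<in> coset (rowmod p) W (msmul (rowmod p) r a)"
    then show "z \<in> {madd (rowmod p) (msmul (rowmod p) r x) u |x u. x \<in> coset (rowmod p) W a \<and> u \<in> W}"
      using coset_self[OF a] unfolding coset_iff by blast
  qed
  then show ?thesis by (simp add: quotmod_def)
qed

lemma quotmod_mzero: "mzero (quotmod (rowmod p) W) = W"
  by (simp add: quotmod_def)

lemma quotmod_carrier: "mcar (quotmod (rowmod p) W) = coset (rowmod p) W ` rowvecs p"
  by (auto simp: quotmod_def)

lemma coset_eq_zero_iff:
  assumes a: "a \<in> rowvecs p"
  shows "coset (rowmod p) W a = W \<longleftrightarrow> a \<in> W"
proof
  assume "coset (rowmod p) W a = W"
  then show "a \<in> W" using coset_self[OF a] by simp
next
  assume aW: "a \<in> W"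
  show "coset (rowmod p) W a = W"
  proof (intro equalityI subsetI)
    fix z assume "z \<in> coset (rowmod p) W a"
    then show "z \<in> W" using row_submodule_add aW unfolding coset_iff by blast
  next
    fix z assume z: "z \<in> W"
    have "z = madd (rowmod p) a (madd (rowmod p) (msmul (rowmod p) (-1) a) z)"
      using row_submodule_subset[OF z] by (intro rowvecs_eqI[of _ p]) (simp_all add: rowmod_madd rowmod_msmul)
    then show "z \<in> coset (rowmod p) W a"
      using row_submodule_add row_submodule_smul aW z unfolding coset_iff by blast
  qed
qed

lemma lhom_coset: "lhom (rowmod p) (quotmod (rowmod p) W) (coset (rowmod p) W)"
  unfolding lhom_def using quotmod_add_coset quotmod_smul_coset quotmod_carrier
  by (auto simp: rowmod_madd rowmod_msmul)

lemma lmodule_quotmod: "lmodule (quotmod (rowmod p) W)"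
  by (rule lmodule_lhom_image[OF lmodule_rowmod lhom_coset quotmod_carrier[symmetric]])
    (simp add: coset_eq_zero_iff[OF lmodule_zero_closed[OF lmodule_rowmod]] row_submodule_zero quotmod_mzero)

lemma coset_add_member:
  assumes a: "a \<in> rowvecs p" and w: "w \<in> W"
  shows "coset (rowmod p) W (madd (rowmod p) a w) = coset (rowmod p) W a"
proof -
  have "coset (rowmod p) W (madd (rowmod p) a w)
      = madd (quotmod (rowmod p) W) (coset (rowmod p) W a) (mzero (quotmod (rowmod p) W))"
    using quotmod_add_coset[OF a row_submodule_subset[OF w]] coset_eq_zero_iff[OF row_submodule_subset[OF w]] w
    by (simp add: quotmod_mzero)
  also have "\<dots> = coset (rowmod p) W a"
    using lmodule_add_zero_right[OF lmodule_quotmod] quotmod_carrier a by simp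
  finally show ?thesis .
qed

lemma msum_quotmod_cosets:
  assumes "\<And>j. j < t \<Longrightarrow> v j \<in> rowvecs p"
  shows "msum (quotmod (rowmod p) W) (\<lambda>j. msmul (quotmod (rowmod p) W) (c j) (coset (rowmod p) W (v j))) t
    = coset (rowmod p) W (vecmat c v t p)"
  by (rule lhom_vecmat[OF lhom_coset lmodule_quotmod assms, symmetric])

end

lemma fp_quotmod_vecmat_image: "fp (quotmod (rowmod p) {vecmat y A q p | y. y \<in> rowvecs q})"
proof -
  let ?W = "{vecmat y A q p | y. y \<in> rowvecs q}"
  note W = row_submodule_vecmat_image[of p A q]
  have "lker (rowmod p) (quotmod (rowmod p) ?W) (coset (rowmod p) ?W) = ?W"
    unfolding lker_def quotmod_mzero[OF W]
    using coset_eq_zero_iff[OF W] row_submodule_subset[OF W] by blast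
  then show ?thesis
    unfolding fp_def
    by (intro conjI lmodule_quotmod[OF W] exI[of _ p] exI[of _ q] exI[of _ A]
        exI[of _ "coset (rowmod p) ?W"] lhom_coset[OF W] quotmod_carrier[OF W, symmetric])
qed

section \<open>Maps induced on quotients and the first isomorphism theorem\<close>

lemma lhom_eq_imp_diff_in_lker:
  assumes N: "lmodule N" and f: "lhom (rowmod p) N f"
    and a: "a \<in> rowvecs p" and b: "b \<in> rowvecs p" and eq: "f a = f b"
  shows "\<exists>d\<in>lker (rowmod p) N f. b = madd (rowmod p) a d"
proof -
  define d where "d = madd (rowmod p) b (msmul (rowmod p) (-1) a)"
  have d_in: "d \<in> rowvecs p" by (simp add: d_def rowmod_madd)
  have "madd (rowmod p) d a = b" using b by (intro rowvecs_eqI[of _ p]) (simp_all add: d_def rowmod_madd rowmod_msmul)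
  then have "madd N (f d) (f a) = madd N (mzero N) (f a)"
    using lhom_add[OF f d_in a] eq lmodule_add_zero_left[OF N lhom_closed[OF f a]] by simp
  then have "f d = mzero N"
    using lmodule_add_right_cancel[OF N lhom_closed[OF f d_in] lmodule_zero_closed[OF N] lhom_closed[OF f a]] by blast
  moreover have "b = madd (rowmod p) a d"
    using b by (intro rowvecs_eqI[of _ p]) (simp_all add: d_def rowmod_madd rowmod_msmul)
  ultimately show ?thesis using d_in unfolding lker_def by blast
qed

definition quot_map :: "((nat \<Rightarrow> 'r::ring_1) \<Rightarrow> 'n) \<Rightarrow> nat \<Rightarrow> (nat \<Rightarrow> 'r) set \<Rightarrow> 'n \<Rightarrow> (nat \<Rightarrow> 'r) set" where
  "quot_map f p W = restrict (\<lambda>z. coset (rowmod p) W (SOME a. a \<in> rowvecs p \<and> f a = z)) (f ` rowvecs p)"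

context
  fixes N :: "('r::ring_1, 'n) lmod" and f p W
  assumes N: "lmodule N" and f: "lhom (rowmod p) N f" and lker_subset: "lker (rowmod p) N f \<subseteq> W"
    and W: "row_submodule p W"
begin

lemma quot_map_apply:
  assumes a: "a \<in> rowvecs p"
  shows "quot_map f p W (f a) = coset (rowmod p) W a"
proof -
  define b where "b = (SOME b. b \<in> rowvecs p \<and> f b = f a)"
  have b: "b \<in> rowvecs p" "f b = f a" using someI_ex[of "\<lambda>b. b \<in> rowvecs p \<and> f b = f a"] a
    unfolding b_def by blast+
  obtain d where d: "d \<in> W" "a = madd (rowmod p) b d"
    using lhom_eq_imp_diff_in_lker[OF N f b(1) a b(2)] lker_subset by blast
  have "quot_map f p W (f a) = coset (rowmod p) W b" using a unfolding quot_map_def b_def by simp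
  also have "\<dots> = coset (rowmod p) W a" using coset_add_member[OF W b(1) d(1)] d(2) by simp
  finally show ?thesis .
qed

lemma lhom_quot_map: "lhom (submod N (f ` rowvecs p)) (quotmod (rowmod p) W) (quot_map f p W)"
proof -
  have submod: "mcar (submod N (f ` rowvecs p)) = f ` rowvecs p"
    "madd (submod N (f ` rowvecs p)) = madd N" "msmul (submod N (f ` rowvecs p)) = msmul N"
    by (simp_all add: submod_def)
  show ?thesis
    unfolding lhom_def submod
  proof (intro conjI ballI allI)
  show "quot_map f p W \<in> f ` rowvecs p \<rightarrow> mcar (quotmod (rowmod p) W)"
    using quot_map_apply quotmod_carrier[OF W] by auto
next
  fix x y assume "x \<in> f ` rowvecs p" "y \<in> f ` rowvecs p"
  then obtain a b where ab: "a \<in> rowvecs p" "b \<in> rowvecs p" and xy: "x = f a" "y = f b" by blast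
  have "madd N x y = f (madd (rowmod p) a b)" using lhom_add[OF f ab] xy by simp
  then show "quot_map f p W (madd N x y) = madd (quotmod (rowmod p) W) (quot_map f p W x) (quot_map f p W y)"
    using quot_map_apply ab xy quotmod_add_coset[OF W ab] by (simp add: rowmod_madd)
next
  fix r x assume "x \<in> f ` rowvecs p"
  then obtain a where a: "a \<in> rowvecs p" and x: "x = f a" by blast
  have "msmul N r x = f (msmul (rowmod p) r a)" using lhom_smul[OF f a] x by simp
  then show "quot_map f p W (msmul N r x) = msmul (quotmod (rowmod p) W) r (quot_map f p W x)"
    using quot_map_apply a x quotmod_smul_coset[OF W a] by (simp add: rowmod_msmul)
  qed
qed

lemma quot_map_Hom:
  assumes onto: "f ` rowvecs p = mcar N"
  shows "quot_map f p W \<in> Hom N (quotmod (rowmod p) W)"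
proof -
  have "submod N (f ` rowvecs p) = N" unfolding onto submod_def by simp
  then show ?thesis
    using lhom_quot_map onto by (simp add: Hom_def quot_map_def)
qed

lemma bij_betw_quot_map:
  assumes W_eq: "W = lker (rowmod p) N f"
  shows "bij_betw (quot_map f p W) (f ` rowvecs p) (mcar (quotmod (rowmod p) W))"
proof -
  have "inj_on (quot_map f p W) (f ` rowvecs p)"
  proof (rule inj_onI)
    fix x y assume "x \<in> f ` rowvecs p" "y \<in> f ` rowvecs p" and eq: "quot_map f p W x = quot_map f p W y"
    then obtain a b where ab: "a \<in> rowvecs p" "b \<in> rowvecs p" and xy: "x = f a" "y = f b" by blast
    have "a \<in> coset (rowmod p) W b"
      using eq coset_self[OF W ab(1)] quot_map_apply ab xy by simp
    then obtain u where u: "u \<in> W" "a = madd (rowmod p) b u" unfolding coset_iff[OF W] by blast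
    have "f u = mzero N" using u(1) W_eq unfolding lker_def by blast
    then show "x = y"
      using xy u lhom_add[OF f ab(2) row_submodule_subset[OF W u(1)]]
        lmodule_add_zero_right[OF N lhom_closed[OF f ab(2)]] by simp
  qed
  moreover have "quot_map f p W ` f ` rowvecs p = mcar (quotmod (rowmod p) W)"
    unfolding quotmod_carrier[OF W] image_image using quot_map_apply by (auto simp: image_iff)
  ultimately show ?thesis unfolding bij_betw_def by blast
qed

end

theorem liso_submod_image_quotmod_lker:
  assumes N: "lmodule N" and f: "lhom (rowmod p) N f"
  shows "liso (submod N (f ` rowvecs p)) (quotmod (rowmod p) (lker (rowmod p) N f))"
  using lhom_quot_map[OF N f order_refl row_submodule_lker[OF N f]]
    bij_betw_quot_map[OF N f order_refl row_submodule_lker[OF N f] refl]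
  unfolding liso_def by (auto simp: submod_def)

lemma fp_obtain_iso_quotmod:
  assumes "fp N"
  obtains p q and A :: "nat \<Rightarrow> nat \<Rightarrow> 'r::ring_1" and \<theta>
  where "\<theta> \<in> Hom N (quotmod (rowmod p) {vecmat y A q p | y. y \<in> rowvecs q})"
    and "bij_betw \<theta> (mcar N) (mcar (quotmod (rowmod p) {vecmat y A q p | y. y \<in> rowvecs q}))"
proof -
  from assms obtain p q A f where N: "lmodule N" and f: "lhom (rowmod p) N f"
    and onto: "f ` rowvecs p = mcar N" and ker: "lker (rowmod p) N f = {vecmat y A q p | y. y \<in> rowvecs q}"
    unfolding fp_def by (elim conjE exE) (rule that)
  note W = row_submodule_vecmat_image[of p A q] and ker_subset = equalityD1[OF ker]
  show ?thesis
  proof (rule that)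
    show "quot_map f p {vecmat y A q p | y. y \<in> rowvecs q}
        \<in> Hom N (quotmod (rowmod p) {vecmat y A q p | y. y \<in> rowvecs q})"
      by (rule quot_map_Hom[OF N f ker_subset W onto])
    show "bij_betw (quot_map f p {vecmat y A q p | y. y \<in> rowvecs q}) (mcar N)
        (mcar (quotmod (rowmod p) {vecmat y A q p | y. y \<in> rowvecs q}))"
      using bij_betw_quot_map[OF N f ker_subset W ker[symmetric]] onto by simp
  qed
qed

definition unit_row :: "nat \<Rightarrow> nat \<Rightarrow> nat \<Rightarrow> 'r::ring_1" where
  "unit_row p j = restrict (\<lambda>s. if s = j then 1 else 0) {..<p}"

lemma unit_row_in_rowvecs [simp]: "unit_row p j \<in> rowvecs p"
  by (simp add: unit_row_def)

lemma vecmat_unit_row_left: "i < m \<Longrightarrow> vecmat (unit_row m i) A m p = restrict (A i) {..<p}"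
  unfolding vecmat_def unit_row_def
  by (rule restrict_ext) (simp add: if_distrib[where f = "\<lambda>c. c * _"] sum.delta cong: if_cong)

lemma vecmat_unit_rows_shift:
  assumes s: "s < n"
  shows "vecmat x (\<lambda>j. unit_row n (d + j)) t n s = (if d \<le> s \<and> s - d < t then x (s - d) else 0)"
proof -
  have "vecmat x (\<lambda>j. unit_row n (d + j)) t n s = (\<Sum>j<t. if j = s - d \<and> d \<le> s then x j else 0)"
    unfolding vecmat_def unit_row_def using s by (auto intro: sum.cong)
  also have "\<dots> = (if d \<le> s \<and> s - d < t then x (s - d) else 0)"
    by (cases "d \<le> s") (simp_all add: sum.delta)
  finally show ?thesis .
qed

lemma vecmat_unit_rows: "s < n \<Longrightarrow> vecmat x (unit_row n) t n s = (if s < t then x s else 0)"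
  using vecmat_unit_rows_shift[where d = 0, of s n x t] by simp

lemma sum_lessThan_add:
  fixes q t :: nat
  shows "(\<Sum>i<q + t. g i) = (\<Sum>i<q. g i) + (\<Sum>j<t. g (q + j) :: 'a::comm_monoid_add)"
  by (induction t) (simp_all add: add.assoc)

definition stack_rows :: "nat \<Rightarrow> (nat \<Rightarrow> nat \<Rightarrow> 'r) \<Rightarrow> (nat \<Rightarrow> nat \<Rightarrow> 'r) \<Rightarrow> nat \<Rightarrow> nat \<Rightarrow> 'r" where
  "stack_rows q A C i = (if i < q then A i else C (i - q))"

lemma vecmat_stack_rows:
  "vecmat y (stack_rows q A C) (q + t) p = madd (rowmod p) (vecmat y A q p) (vecmat (\<lambda>j. y (q + j)) C t p)"
  unfolding vecmat_def rowmod_madd by (rule restrict_ext) (simp add: sum_lessThan_add stack_rows_def)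

lemma vecmat_image_subset_stack_rows:
  "{vecmat y A q p | y. y \<in> rowvecs q} \<subseteq> {vecmat y (stack_rows q A C) (q + t) p | y. y \<in> rowvecs (q + t)}"
proof clarify
  fix y :: "nat \<Rightarrow> 'a"
  let ?y = "restrict (\<lambda>i. if i < q then y i else 0) {..<q + t}"
  have "vecmat ?y (stack_rows q A C) (q + t) p = vecmat y A q p"
    unfolding vecmat_def by (rule restrict_ext) (simp add: sum_lessThan_add stack_rows_def)
  then show "\<exists>y'. vecmat y A q p = vecmat y' (stack_rows q A C) (q + t) p \<and> y' \<in> rowvecs (q + t)"
    by (intro exI[of _ ?y]) simp
qed

lemma stack_rows_in_vecmat_image:
  assumes "j < t" and "C j \<in> rowvecs p"
  shows "C j \<in> {vecmat y (stack_rows q A C) (q + t) p | y. y \<in> rowvecs (q + t)}"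
proof -
  have "vecmat (unit_row (q + t) (q + j)) (stack_rows q A C) (q + t) p = C j"
    using assms by (simp add: vecmat_unit_row_left stack_rows_def rowvecs_eq PiE_restrict)
  then show ?thesis by (intro CollectI exI[of _ "unit_row (q + t) (q + j)"]) simp
qed

definition join_cols :: "nat \<Rightarrow> (nat \<Rightarrow> nat \<Rightarrow> 'r) \<Rightarrow> (nat \<Rightarrow> nat \<Rightarrow> 'r) \<Rightarrow> nat \<Rightarrow> nat \<Rightarrow> 'r" where
  "join_cols k B B' i j = (if j < k then B i j else B' i (j - k))"

lemma vecmat_join_cols:
  "k \<le> n \<Longrightarrow> s < n \<Longrightarrow>
    vecmat y (join_cols k B B') m n s = (if s < k then vecmat y B m k s else vecmat y B' m (n - k) (s - k))"
  by (auto simp: vecmat_def join_cols_def)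

lemma ppB_quotmod_lift:
  assumes W: "row_submodule p W" and \<omega>: "\<omega> \<in> ppB m k n B B' (quotmod (rowmod p) W)"
    and a: "\<And>j. j < k \<Longrightarrow> a j \<in> rowvecs p \<and> \<omega> j = coset (rowmod p) W (a j)"
  obtains b where "\<And>l. l < n - k \<Longrightarrow> b l \<in> rowvecs p"
    and "\<And>i. i < m \<Longrightarrow> madd (rowmod p) (vecmat (B i) a k p) (vecmat (B' i) b (n - k) p) \<in> W"
proof -
  let ?Q = "quotmod (rowmod p) W"
  obtain \<omega>' where \<omega>': "\<omega>' \<in> {..<n - k} \<rightarrow>\<^sub>E mcar ?Q"
    and rel: "\<And>i. i < m \<Longrightarrow> madd ?Q (msum ?Q (\<lambda>j. msmul ?Q (B i j) (\<omega> j)) k)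
                   (msum ?Q (\<lambda>j. msmul ?Q (B' i j) (\<omega>' j)) (n - k)) = mzero ?Q"
    using \<omega> unfolding ppB_def by blast
  define b where "b l = (SOME c. c \<in> rowvecs p \<and> \<omega>' l = coset (rowmod p) W c)" for l
  have b: "b l \<in> rowvecs p \<and> \<omega>' l = coset (rowmod p) W (b l)" if "l < n - k" for l
  proof -
    have "\<omega>' l \<in> coset (rowmod p) W ` rowvecs p"
      using \<omega>' that quotmod_carrier[OF W] by (simp add: PiE_iff)
    then have "\<exists>c. c \<in> rowvecs p \<and> \<omega>' l = coset (rowmod p) W c" by blast
    then show ?thesis unfolding b_def by (rule someI_ex)
  qed
  have "madd (rowmod p) (vecmat (B i) a k p) (vecmat (B' i) b (n - k) p) \<in> W" if i: "i < m" for i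
  proof -
    have "coset (rowmod p) W (madd (rowmod p) (vecmat (B i) a k p) (vecmat (B' i) b (n - k) p))
        = madd ?Q (msum ?Q (\<lambda>j. msmul ?Q (B i j) (\<omega> j)) k)
                  (msum ?Q (\<lambda>j. msmul ?Q (B' i j) (\<omega>' j)) (n - k))"
      using a b by (simp add: quotmod_add_coset[OF W] msum_quotmod_cosets[OF W] cong: msum_cong)
    also have "\<dots> = W" using rel[OF i] quotmod_mzero[OF W] by simp
    finally show ?thesis by (simp add: coset_eq_zero_iff[OF W] rowmod_madd)
  qed
  with b that show ?thesis by blast
qed

lemma unit_cosets_in_ppB:
  fixes m k n :: nat and B B' :: "nat \<Rightarrow> nat \<Rightarrow> 'r::ring_1"
  assumes kn: "k \<le> n"
  defines "W \<equiv> {vecmat y (join_cols k B B') m n | y. y \<in> rowvecs m}"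
  shows "restrict (\<lambda>j. coset (rowmod n) W (unit_row n j)) {..<k} \<in> ppB m k n B B' (quotmod (rowmod n) W)"
proof -
  let ?Q = "quotmod (rowmod n) W"
  let ?\<omega> = "restrict (\<lambda>j. coset (rowmod n) W (unit_row n j)) {..<k}"
  let ?\<omega>' = "restrict (\<lambda>l. coset (rowmod n) W (unit_row n (k + l))) {..<n - k}"
  have W: "row_submodule n W" unfolding W_def by (rule row_submodule_vecmat_image)
  have "madd ?Q (msum ?Q (\<lambda>j. msmul ?Q (B i j) (?\<omega> j)) k)
           (msum ?Q (\<lambda>j. msmul ?Q (B' i j) (?\<omega>' j)) (n - k)) = mzero ?Q" if i: "i < m" for i
  proof -
    have row_i: "madd (rowmod n) (vecmat (B i) (unit_row n) k n)
        (vecmat (B' i) (\<lambda>l. unit_row n (k + l)) (n - k) n) = vecmat (unit_row m i) (join_cols k B B') m n"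
      using kn i by (intro rowvecs_eqI[of _ n])
        (auto simp: rowmod_madd vecmat_unit_rows vecmat_unit_rows_shift vecmat_unit_row_left join_cols_def)
    have "madd ?Q (msum ?Q (\<lambda>j. msmul ?Q (B i j) (?\<omega> j)) k)
           (msum ?Q (\<lambda>j. msmul ?Q (B' i j) (?\<omega>' j)) (n - k))
        = coset (rowmod n) W (vecmat (unit_row m i) (join_cols k B B') m n)"
      unfolding row_i[symmetric]
      by (simp add: quotmod_add_coset[OF W] msum_quotmod_cosets[OF W] cong: msum_cong)
    also have "\<dots> = W" by (subst coset_eq_zero_iff[OF W vecmat_in_rowvecs]) (auto simp: W_def)
    finally show ?thesis by (simp add: quotmod_mzero[OF W])
  qed
  moreover have "?\<omega>' \<in> {..<n - k} \<rightarrow>\<^sub>E mcar ?Q" "?\<omega> \<in> {..<k} \<rightarrow>\<^sub>E mcar ?Q"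
    by (auto simp: quotmod_carrier[OF W])
  ultimately show ?thesis unfolding ppB_def by blast
qed

lemma vecmat_unit_rows_eq_join_cols:
  assumes kn: "k \<le> n" and x: "x \<in> rowvecs k"
    and eq: "vecmat x (unit_row n) k n = vecmat y (join_cols k B B') m n"
  shows "x = vecmat y B m k" and "vecmat y B' m (n - k) = mzero (rowmod (n - k))"
proof -
  have entry: "vecmat y (join_cols k B B') m n s = (if s < k then x s else 0)" if "s < n" for s
    using vecmat_unit_rows[OF that, of x k] eq by simp
  show "x = vecmat y B m k"
  proof (rule rowvecs_eqI[OF x vecmat_in_rowvecs])
    fix s assume sk: "s < k"
    then have "s < n" using kn by simp
    then show "x s = vecmat y B m k s"
      using entry vecmat_join_cols[OF kn, of s y B B' m] sk by simp
  qed
  show "vecmat y B' m (n - k) = mzero (rowmod (n - k))"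
  proof (intro rowvecs_eqI[of _ "n - k"])
    fix l assume l: "l < n - k"
    then have "k + l < n" by simp
    then show "vecmat y B' m (n - k) l = mzero (rowmod (n - k)) l"
      using entry vecmat_join_cols[OF kn, of "k + l" y B B' m] l by (simp add: rowmod_mzero)
  qed (simp_all add: rowmod_mzero)
qed

section \<open>The defect of \<open>B(\<phi>,-)\<close>\<close>

locale pp_presentation =
  fixes m k n :: nat and B B' :: "nat \<Rightarrow> nat \<Rightarrow> 'r::ring_1"
    and N :: "('r, 'n) lmod" and N' :: "('r, 'n2) lmod" and \<alpha> :: "'n \<Rightarrow> 'n2"
    and \<eta> :: "('r, 'r univ) lmod \<Rightarrow> ('n \<Rightarrow> 'r univ) \<Rightarrow> nat \<Rightarrow> 'r univ"
    and p q :: nat and A :: "nat \<Rightarrow> nat \<Rightarrow> 'r" and f :: "(nat \<Rightarrow> 'r) \<Rightarrow> 'n"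
  assumes k_le_n: "k \<le> n"
    and presentation: "is_presentation m k n B B' N N' \<alpha> \<eta>"
    and f_hom: "lhom (rowmod p) N f" and f_onto: "f ` rowvecs p = mcar N"
    and lker_f: "lker (rowmod p) N f = {vecmat y A q p | y. y \<in> rowvecs q}"
begin

lemma fp_N: "fp N" and fp_N': "fp N'" and alpha_Hom: "\<alpha> \<in> Hom N N'"
  using presentation unfolding is_presentation_def by blast+

lemma lmodule_N: "lmodule N" and lmodule_N': "lmodule N'"
  using fp_N fp_N' unfolding fp_def by blast+

lemma lhom_alpha: "lhom N N' \<alpha>"
  using alpha_Hom by (simp add: Hom_def)

lemma eta_image: "fp M \<Longrightarrow> \<eta> M ` Hom N M = ppB m k n B B' M"
  using presentation unfolding is_presentation_def
  by (elim conjE) (drule spec[of _ M], elim impE conjE, assumption, assumption)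

lemma eta_eq_zero_iff:
  "fp M \<Longrightarrow> {compose (mcar N) h \<alpha> | h. h \<in> Hom N' M} = {g \<in> Hom N M. \<eta> M g = restrict (\<lambda>_. mzero M) {..<k}}"
  using presentation unfolding is_presentation_def
  by (elim conjE) (drule spec[of _ M], elim impE conjE, assumption, assumption)

lemma eta_natural:
  "fp M \<Longrightarrow> fp M' \<Longrightarrow> g \<in> Hom M M' \<Longrightarrow> h \<in> Hom N M \<Longrightarrow>
    \<eta> M' (compose (mcar N) g h) = restrict (\<lambda>j. g (\<eta> M h j)) {..<k}"
  using presentation unfolding is_presentation_def
  by (elim conjE) (drule spec[of _ M], drule spec[of _ M'], elim impE conjE, blast, blast)

abbreviation "rels \<equiv> {vecmat y A q p | y. y \<in> rowvecs q}"
abbreviation "Nq \<equiv> quotmod (rowmod p) rels"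
abbreviation "\<theta> \<equiv> quot_map f p rels"

lemma row_submodule_rels: "row_submodule p rels"
  by (rule row_submodule_vecmat_image)

lemma theta_Hom: "\<theta> \<in> Hom N Nq"
  by (rule quot_map_Hom[OF lmodule_N f_hom _ row_submodule_rels f_onto]) (simp add: lker_f)

lemma theta_bij: "bij_betw \<theta> (mcar N) (mcar Nq)"
  using bij_betw_quot_map[OF lmodule_N f_hom _ row_submodule_rels lker_f[symmetric]] f_onto lker_f by simp

lemma theta_apply: "a \<in> rowvecs p \<Longrightarrow> \<theta> (f a) = coset (rowmod p) rels a"
  by (rule quot_map_apply[OF lmodule_N f_hom _ row_submodule_rels]) (simp add: lker_f)

text \<open>Yoneda: transporting along \<open>\<theta> : N \<cong> Nq\<close>, naturality makes \<open>\<eta>\<close> evaluation at the tuple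
  \<open>gen\<close> that corresponds to the universal element \<open>\<eta> Nq \<theta>\<close>.\<close>

definition univ_elem :: "nat \<Rightarrow> 'r univ" where
  "univ_elem = \<eta> Nq \<theta>"

definition gen_row :: "nat \<Rightarrow> nat \<Rightarrow> 'r" where
  "gen_row j = (SOME a. a \<in> rowvecs p \<and> univ_elem j = coset (rowmod p) rels a)"

definition gen :: "nat \<Rightarrow> 'n" where
  "gen j = f (gen_row j)"

lemma univ_elem_in_ppB: "univ_elem \<in> ppB m k n B B' Nq"
  using eta_image[OF fp_quotmod_vecmat_image] theta_Hom unfolding univ_elem_def by blast

lemma gen_row_spec:
  assumes "j < k"
  shows "gen_row j \<in> rowvecs p \<and> univ_elem j = coset (rowmod p) rels (gen_row j)"
proof -
  have "univ_elem j \<in> coset (rowmod p) rels ` rowvecs p"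
    using univ_elem_in_ppB assms quotmod_carrier[OF row_submodule_rels] unfolding ppB_def by auto
  then have "\<exists>a. a \<in> rowvecs p \<and> univ_elem j = coset (rowmod p) rels a" by blast
  then show ?thesis unfolding gen_row_def by (rule someI_ex)
qed

lemma gen_closed: "j < k \<Longrightarrow> gen j \<in> mcar N"
  unfolding gen_def using lhom_closed[OF f_hom] gen_row_spec by blast

lemma theta_gen: "j < k \<Longrightarrow> \<theta> (gen j) = univ_elem j"
  unfolding gen_def using theta_apply gen_row_spec by simp

lemma eta_eq_eval_gen:
  assumes M: "fp M" and g: "g \<in> Hom N M"
  shows "\<eta> M g = restrict (\<lambda>j. g (gen j)) {..<k}"
proof -
  define G where "G = restrict (\<lambda>y. g (inv_into (mcar N) \<theta> y)) (mcar Nq)"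
  have G: "G \<in> Hom Nq M" and G_\<theta>: "compose (mcar N) G \<theta> = g"
    using Hom_compose_inv_into[OF lmodule_N lmodule_quotmod[OF row_submodule_rels] g theta_Hom theta_bij]
    unfolding G_def by blast+
  have "\<eta> M g = restrict (\<lambda>j. G (univ_elem j)) {..<k}"
    using eta_natural[OF fp_quotmod_vecmat_image M G theta_Hom] G_\<theta> unfolding univ_elem_def by simp
  also have "\<dots> = restrict (\<lambda>j. g (gen j)) {..<k}"
  proof (rule restrict_ext)
    fix j assume "j \<in> {..<k}"
    then have "G (univ_elem j) = compose (mcar N) G \<theta> (gen j)"
      using theta_gen gen_closed by (simp add: compose_def)
    then show "G (univ_elem j) = g (gen j)" using G_\<theta> by simp
  qed
  finally show ?thesis .
qed

lemma eval_gen_eq: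
  assumes "fp M" "g \<in> Hom N M" "\<eta> M g = restrict c {..<k}" "j < k"
  shows "g (gen j) = c j"
proof -
  have "restrict (\<lambda>j. g (gen j)) {..<k} j = restrict c {..<k} j"
    using assms(3) eta_eq_eval_gen[OF assms(1,2)] by simp
  then show ?thesis using assms(4) by simp
qed

lemma alpha_gen:
  assumes j: "j < k"
  shows "\<alpha> (gen j) = mzero N'"
proof -
  obtain p' q' and A' :: "nat \<Rightarrow> nat \<Rightarrow> 'r" and \<theta>'
    where \<theta>': "\<theta>' \<in> Hom N' (quotmod (rowmod p') {vecmat y A' q' p' | y. y \<in> rowvecs q'})"
      and bij: "bij_betw \<theta>' (mcar N') (mcar (quotmod (rowmod p') {vecmat y A' q' p' | y. y \<in> rowvecs q'}))"
    by (rule fp_obtain_iso_quotmod[OF fp_N'])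
  let ?Q = "quotmod (rowmod p') {vecmat y A' q' p' | y. y \<in> rowvecs q'}"
  note fpQ = fp_quotmod_vecmat_image[of p' A' q'] and Q = lmodule_quotmod[OF row_submodule_vecmat_image]
  have "compose (mcar N) \<theta>' \<alpha> \<in> {g \<in> Hom N ?Q. \<eta> ?Q g = restrict (\<lambda>_. mzero ?Q) {..<k}}"
    unfolding eta_eq_zero_iff[OF fpQ, symmetric] using \<theta>' by blast
  then have "compose (mcar N) \<theta>' \<alpha> (gen j) = mzero ?Q"
    using eval_gen_eq[OF fpQ _ _ j] by blast
  moreover have "lhom N' ?Q \<theta>'" using \<theta>' by (simp add: Hom_def)
  ultimately have "\<theta>' (\<alpha> (gen j)) = \<theta>' (mzero N')"
    using gen_closed[OF j] lhom_zero[OF lmodule_N' Q] by (simp add: compose_def)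
  then show ?thesis
    using bij lhom_closed[OF lhom_alpha gen_closed[OF j]] lmodule_zero_closed[OF lmodule_N']
    by (auto simp: bij_betw_def dest: inj_onD)
qed

definition gen_map :: "(nat \<Rightarrow> 'r) \<Rightarrow> 'n" where
  "gen_map x = f (vecmat x gen_row k p)"

lemma lhom_gen_map: "lhom (rowmod k) N gen_map"
  unfolding gen_map_def by (rule lhom_compose[OF lhom_vecmat_right f_hom])

lemma gen_map_eq_msum: "gen_map x = msum N (\<lambda>j. msmul N (x j) (gen j)) k"
  unfolding gen_map_def gen_def using lhom_vecmat[OF f_hom lmodule_N] gen_row_spec by blast

lemma gen_map_in_lker_alpha: "gen_map x \<in> lker N N' \<alpha>"
proof -
  have "\<alpha> (gen_map x) = msum N' (\<lambda>j. \<alpha> (msmul N (x j) (gen j))) k"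
    unfolding gen_map_eq_msum
    by (rule lhom_msum[OF lhom_alpha lmodule_N lmodule_N' lmodule_smul_closed[OF lmodule_N gen_closed]])
  also have "\<dots> = mzero N'"
    using lhom_smul[OF lhom_alpha gen_closed] alpha_gen lmodule_smul_zero[OF lmodule_N']
    by (intro msum_zero[OF lmodule_N']) simp
  finally show ?thesis
    unfolding lker_def gen_map_def using lhom_closed[OF f_hom vecmat_in_rowvecs] by simp
qed

lemma lker_alpha_subset_image_gen_map: "lker N N' \<alpha> \<subseteq> gen_map ` rowvecs k"
proof
  fix z assume z: "z \<in> lker N N' \<alpha>"
  let ?W = "{vecmat y (stack_rows q A gen_row) (q + k) p | y. y \<in> rowvecs (q + k)}"
  let ?Q = "quotmod (rowmod p) ?W"
  note W = row_submodule_vecmat_image[of p "stack_rows q A gen_row" "q + k"]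
    and fpQ = fp_quotmod_vecmat_image[of p "stack_rows q A gen_row" "q + k"]
  have lker_subset: "lker (rowmod p) N f \<subseteq> ?W"
    unfolding lker_f by (rule vecmat_image_subset_stack_rows)
  have \<pi>: "quot_map f p ?W \<in> Hom N ?Q" by (rule quot_map_Hom[OF lmodule_N f_hom lker_subset W f_onto])
  have "\<eta> ?Q (quot_map f p ?W) = restrict (\<lambda>_. mzero ?Q) {..<k}"
  proof -
    have "quot_map f p ?W (gen j) = mzero ?Q" if j: "j < k" for j
    proof -
      have "gen_row j \<in> ?W" using stack_rows_in_vecmat_image[OF j] gen_row_spec[OF j] by blast
      then show ?thesis
        unfolding gen_def quot_map_apply[OF lmodule_N f_hom lker_subset W gen_row_spec[OF j, THEN conjunct1]]
        by (simp add: coset_eq_zero_iff[OF W gen_row_spec[OF j, THEN conjunct1]] quotmod_mzero[OF W])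
    qed
    then show ?thesis unfolding eta_eq_eval_gen[OF fpQ \<pi>] by (intro restrict_ext) simp
  qed
  then obtain h where h: "h \<in> Hom N' ?Q" and \<pi>_eq: "quot_map f p ?W = compose (mcar N) h \<alpha>"
    using \<pi> eta_eq_zero_iff[OF fpQ] by blast
  have zN: "z \<in> mcar N" and \<alpha>z: "\<alpha> z = mzero N'" using z unfolding lker_def by auto
  obtain b where b: "b \<in> rowvecs p" "z = f b" using zN f_onto by auto
  have "coset (rowmod p) ?W b = h (\<alpha> z)"
    using quot_map_apply[OF lmodule_N f_hom lker_subset W b(1)] \<pi>_eq zN b(2) by (simp add: compose_def)
  also have "\<dots> = ?W"
    using \<alpha>z h lhom_zero[OF lmodule_N' lmodule_quotmod[OF W]] quotmod_mzero[OF W] by (simp add: Hom_def)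
  finally have "b \<in> ?W" using coset_eq_zero_iff[OF W b(1)] by simp
  then obtain y where y: "b = vecmat y (stack_rows q A gen_row) (q + k) p" by blast
  let ?x = "restrict (\<lambda>j. y (q + j)) {..<k}"
  have "vecmat (restrict y {..<q}) A q p \<in> lker (rowmod p) N f"
    unfolding lker_f by (intro CollectI exI[of _ "restrict y {..<q}"]) simp
  then have "f (vecmat y A q p) = mzero N" unfolding lker_def vecmat_restrict by blast
  then have "z = madd N (mzero N) (gen_map ?x)"
    unfolding b(2) y vecmat_stack_rows gen_map_def vecmat_restrict
    by (simp add: lhom_add[OF f_hom vecmat_in_rowvecs vecmat_in_rowvecs])
  then have "z = gen_map ?x"
    using lmodule_add_zero_left[OF lmodule_N] lhom_closed[OF f_hom vecmat_in_rowvecs]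
    unfolding gen_map_def by simp
  then show "z \<in> gen_map ` rowvecs k" using restrict_in_rowvecs by (rule image_eqI)
qed

lemma image_gen_map: "gen_map ` rowvecs k = lker N N' \<alpha>"
  using gen_map_in_lker_alpha lker_alpha_subset_image_gen_map by blast

text \<open>The relations \<open>yB\<close> with \<open>yB' = 0\<close> lie in the kernel: lift the witness of
  \<open>univ_elem \<in> B(\<phi>, N)\<close> to rows \<open>b\<close>, so that \<open>(yB) gen_row = y (B gen_row + B' b)\<close> is a
  combination of relations of \<open>N\<close>.\<close>

lemma relations_in_lker_gen_map:
  assumes y: "y \<in> rowvecs m" and yB': "vecmat y B' m (n - k) = mzero (rowmod (n - k))"
  shows "vecmat y B m k \<in> lker (rowmod k) N gen_map"
proof -
  obtain b where b: "\<And>l. l < n - k \<Longrightarrow> b l \<in> rowvecs p"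
    and rel: "\<And>i. i < m \<Longrightarrow> madd (rowmod p) (vecmat (B i) gen_row k p) (vecmat (B' i) b (n - k) p) \<in> rels"
    using ppB_quotmod_lift[OF row_submodule_rels univ_elem_in_ppB gen_row_spec] by blast
  define w where "w i = madd (rowmod p) (vecmat (B i) gen_row k p) (vecmat (B' i) b (n - k) p)" for i
  have "vecmat y w m p
      = madd (rowmod p) (vecmat (vecmat y B m k) gen_row k p) (vecmat (vecmat y B' m (n - k)) b (n - k) p)"
    unfolding w_def[abs_def] by (simp add: vecmat_madd_rows vecmat_vecmat)
  also have "\<dots> = vecmat (vecmat y B m k) gen_row k p"
    using lmodule_add_zero_right[OF lmodule_rowmod vecmat_in_rowvecs] by (simp add: yB' vecmat_zero)
  finally have "gen_map (vecmat y B m k) = f (vecmat y w m p)" unfolding gen_map_def by simp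
  also have "\<dots> = msum N (\<lambda>i. msmul N (y i) (f (w i))) m"
    by (rule lhom_vecmat[OF f_hom lmodule_N]) (simp add: w_def rowmod_madd)
  also have "\<dots> = mzero N"
  proof (rule msum_zero[OF lmodule_N])
    fix i assume "i < m"
    then have "f (w i) = mzero N" using rel lker_f unfolding w_def lker_def by blast
    then show "msmul N (y i) (f (w i)) = mzero N" by (simp add: lmodule_smul_zero[OF lmodule_N])
  qed
  finally show ?thesis unfolding lker_def by simp
qed

text \<open>Conversely, \<open>\<eta>\<close> hits the generic point of \<open>B(\<phi>,-)\<close>: the standard basis of
  \<open>R\<^sup>1\<^sup>\<times>\<^sup>n\<close> modulo the row space of \<open>(B B')\<close>.\<close>

lemma lker_gen_map_subset_relations:
  assumes x: "x \<in> lker (rowmod k) N gen_map"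
  shows "\<exists>y. y \<in> rowvecs m \<and> vecmat y B' m (n - k) = mzero (rowmod (n - k)) \<and> x = vecmat y B m k"
proof -
  let ?W = "{vecmat y (join_cols k B B') m n | y. y \<in> rowvecs m}"
  let ?L = "quotmod (rowmod n) ?W"
  note W = row_submodule_vecmat_image[of n "join_cols k B B'" m]
    and fpL = fp_quotmod_vecmat_image[of n "join_cols k B B'" m]
  have "restrict (\<lambda>j. coset (rowmod n) ?W (unit_row n j)) {..<k} \<in> \<eta> ?L ` Hom N ?L"
    using unit_cosets_in_ppB[OF k_le_n] eta_image[OF fpL] by simp
  then obtain g where g: "g \<in> Hom N ?L"
    and eta_g: "\<eta> ?L g = restrict (\<lambda>j. coset (rowmod n) ?W (unit_row n j)) {..<k}"
    by (elim imageE) simp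
  have g_hom: "lhom N ?L g" using g by (simp add: Hom_def)
  have xk: "x \<in> rowvecs k" and zero: "gen_map x = mzero N" using x unfolding lker_def by auto
  have "coset (rowmod n) ?W (vecmat x (unit_row n) k n) = g (gen_map x)"
  proof -
    have "g (gen_map x) = msum ?L (\<lambda>j. g (msmul N (x j) (gen j))) k"
      unfolding gen_map_eq_msum
      by (rule lhom_msum[OF g_hom lmodule_N lmodule_quotmod[OF W] lmodule_smul_closed[OF lmodule_N gen_closed]])
    also have "\<dots> = msum ?L (\<lambda>j. msmul ?L (x j) (coset (rowmod n) ?W (unit_row n j))) k"
      using eval_gen_eq[OF fpL g eta_g] by (intro msum_cong) (simp add: lhom_smul[OF g_hom gen_closed])
    finally show ?thesis by (simp add: msum_quotmod_cosets[OF W])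
  qed
  also have "\<dots> = ?W"
    using zero lhom_zero[OF lmodule_N lmodule_quotmod[OF W] g_hom] quotmod_mzero[OF W] by simp
  finally obtain y where y: "y \<in> rowvecs m" and eq: "vecmat x (unit_row n) k n = vecmat y (join_cols k B B') m n"
    using coset_eq_zero_iff[OF W vecmat_in_rowvecs] by blast
  show ?thesis
    using y vecmat_unit_rows_eq_join_cols[OF k_le_n xk eq] by blast
qed

lemma lker_gen_map:
  "lker (rowmod k) N gen_map
    = {vecmat y B m k | y. y \<in> rowvecs m \<and> vecmat y B' m (n - k) = mzero (rowmod (n - k))}"
  using relations_in_lker_gen_map lker_gen_map_subset_relations by blast

end

theorem mainTheorem3:
  fixes B B' :: "nat \<Rightarrow> nat \<Rightarrow> 'r::ring_1" and m k n :: nat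
    and N :: "('r, 'n) lmod" and N' :: "('r, 'n2) lmod" and \<alpha> :: "'n \<Rightarrow> 'n2"
    and \<eta> :: "('r, 'r univ) lmod \<Rightarrow> ('n \<Rightarrow> 'r univ) \<Rightarrow> nat \<Rightarrow> 'r univ"
  assumes "k \<le> n"
    and "is_presentation m k n B B' N N' \<alpha> \<eta>"
  shows "liso (submod N (lker N N' \<alpha>))
              (quotmod (rowmod k)
                 {vecmat y B m k | y. y \<in> mcar (rowmod m) \<and> vecmat y B' m (n - k) = mzero (rowmod (n - k))})"
proof -
  have "fp N" using assms(2) unfolding is_presentation_def by (elim conjE)
  then obtain p q A f where "lhom (rowmod p) N f" "f ` rowvecs p = mcar N"
    "lker (rowmod p) N f = {vecmat y A q p | y. y \<in> rowvecs q}"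
    unfolding fp_def by (elim conjE exE) (rule that)
  then interpret pp_presentation m k n B B' N N' \<alpha> \<eta> p q A f
    using assms by unfold_locales
  show ?thesis
    using liso_submod_image_quotmod_lker[OF lmodule_N lhom_gen_map]
    unfolding image_gen_map lker_gen_map .
qed

end
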